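(* Let $n\ge1$, let $\theta_1,\dots,\theta_n,\theta\in\mathbb R$, $\boldsymbol\theta=(\theta_1,\dots,\theta_n)$, and define $|W_n(\boldsymbol\theta)\rangle=\frac1{\sqrt n}\sum_{j=1}^ne^{i\theta_j}X_j|0\rangle^{\otimes n}$, $|W_n(\theta)\rangle=|W_n((\theta,2\theta,\dots,n\theta))\rangle$, and $|W_n\rangle=|W_n(0)\rangle$. Then $$\|\Xi_{W_n(\boldsymbol\theta)}\|_4^4=\frac{d}{n^4}\Bigl[6n(n-1)+\Bigl|\sum_{j=1}^ne^{4i\theta_j}\Bigr|^2\Bigr],\qquad M_2(W_n(\boldsymbol\theta))=\log_2\frac{n^4}{6n(n-1)+\bigl|\sum_{j=1}^ne^{4i\theta_j}\bigr|^2};$$ in particular $\|\Xi_{W_n}\|_4^4=\frac{d(7n-6)}{n^3}$, $M_2(W_n)=\log_2\frac{n^3}{7n-6}$, and $$\|\Xi_{W_n(\theta)}\|_4^4=\frac{d[6n^2-6n+\sin^2(2n\theta)/\sin^2(2\theta)]}{n^4},\qquad M_2(W_n(\theta))=\log_2\frac{n^4}{6n^2-6n+\sin^2(2n\theta)/\sin^2(2\theta)}$$ (with $\sin^2(2n\theta)/\sin^2(2\theta)$ interpreted as $n^2$ when $\sin(2\theta)=0$).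
   Context: $d=2^n$; $X_j$ denotes the Pauli $X$ acting on the $j$th qubit. $\overline{\mathcal P}_n=\{I,X,Y,Z\}^{\otimes n}$; for a pure state $|\psi\rangle$, $\Xi_\psi(P)=\langle\psi|P|\psi\rangle$ for $P\in\overline{\mathcal P}_n$, $\|\Xi_\psi\|_4^4=\sum_P\Xi_\psi(P)^4$, and the stabilizer 2-Rényi entropy is $M_2(\psi)=-\log_2(\|\Xi_\psi\|_4^4/d)$. *)

theory Defs
  imports Complex_Main
begin

text \<open>A computational basis bit is a bool,
  False = |0>, True = |1>.  n-qubit basis states are bool lists of length n,
  n-qubit Pauli strings (elements of {I,X,Y,Z}^{\<otimes>n}) are pauli lists of length n;
  list position k corresponds to qubit k+1.\<close>

datatype pauli = PI | PX | PY | PZ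

fun pauli_entry :: "pauli \<Rightarrow> bool \<Rightarrow> bool \<Rightarrow> complex" where
  "pauli_entry PI a b = (if a = b then 1 else 0)"
| "pauli_entry PX a b = (if a \<noteq> b then 1 else 0)"
| "pauli_entry PY a b = (if a = False \<and> b = True then - \<i>
                          else if a = True \<and> b = False then \<i> else 0)"
| "pauli_entry PZ a b = (if a = b then (if a then -1 else 1) else 0)"

definition string_entry :: "pauli list \<Rightarrow> bool list \<Rightarrow> bool list \<Rightarrow> complex" where
  "string_entry ps a b = (\<Prod>k<length ps. pauli_entry (ps ! k) (a ! k) (b ! k))"

definition basis_states :: "nat \<Rightarrow> bool list set" where
  "basis_states n = {xs. length xs = n}"

definition pauli_strings :: "nat \<Rightarrow> pauli list set" where
  "pauli_strings n = {ps. length ps = n}"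

type_synonym qstate = "bool list \<Rightarrow> complex"

definition apply_string :: "nat \<Rightarrow> pauli list \<Rightarrow> qstate \<Rightarrow> qstate" where
  "apply_string n ps v = (\<lambda>a. \<Sum>b\<in>basis_states n. string_entry ps a b * v b)"

definition zero_state :: "nat \<Rightarrow> qstate" where
  "zero_state n = (\<lambda>a. if a = replicate n False then 1 else 0)"

definition X_on :: "nat \<Rightarrow> nat \<Rightarrow> pauli list" where
  "X_on n j = map (\<lambda>k. if k = j - 1 then PX else PI) [0..<n]"

text \<open>Pauli spectrum Xi_psi(P) = <psi|P|psi> (real since P is Hermitian).\<close>
definition Xi :: "nat \<Rightarrow> qstate \<Rightarrow> pauli list \<Rightarrow> real" where
  "Xi n \<psi> P = Re (\<Sum>a\<in>basis_states n. cnj (\<psi> a) * apply_string n P \<psi> a)"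

definition Xi_norm4_pow4 :: "nat \<Rightarrow> qstate \<Rightarrow> real" where
  "Xi_norm4_pow4 n \<psi> = (\<Sum>P\<in>pauli_strings n. (Xi n \<psi> P) ^ 4)"

definition M2 :: "nat \<Rightarrow> qstate \<Rightarrow> real" where
  "M2 n \<psi> = - log 2 (Xi_norm4_pow4 n \<psi> / 2 ^ n)"

definition W_state :: "nat \<Rightarrow> (nat \<Rightarrow> real) \<Rightarrow> qstate" where
  "W_state n \<theta> = (\<lambda>a. complex_of_real (1 / sqrt (real n)) *
      (\<Sum>j=1..n. cis (\<theta> j) * apply_string n (X_on n j) (zero_state n) a))"

end

theory Submission
  imports Defs
begin

text \<open>Write a one-excitation state as \<open>\<psi> = \<Sum>\<^sub>j c\<^sub>j |e\<^sub>j\<rangle>\<close>. For a Pauli string \<open>Q \<otimes> p\<close> the expectation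
  \<open>\<langle>\<psi>|Q \<otimes> p|\<psi>\<rangle>\<close> is a linear combination of \<open>\<langle>\<psi>'|Q|\<psi>'\<rangle>\<close>, \<open>\<langle>0|Q|\<psi>'\<rangle>\<close> and \<open>\<langle>0|Q|0\<rangle>\<close> for the
  state \<open>\<psi>'\<close> on one qubit fewer. Summing fourth powers over the last Pauli factor therefore gives
  recursions for a few moment sums that close up and solve to
  \<open>\<parallel>\<Xi>\<^sub>\<psi>\<parallel>\<^sub>4\<^sup>4 = d (6 (\<Sum> |c\<^sub>j|\<^sup>4)\<^sup>2 - 6 \<Sum> |c\<^sub>j|\<^sup>8 + |\<Sum> c\<^sub>j\<^sup>4|\<^sup>2)\<close>.
  For \<open>W\<^sub>n(\<theta>)\<close> all \<open>|c\<^sub>j|\<^sup>2 = 1/n\<close>; for equally spaced phases \<open>\<Sum> c\<^sub>j\<^sup>4\<close> is a geometric sum.\<close>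

definition one_hot :: "nat \<Rightarrow> nat \<Rightarrow> bool list" where
  "one_hot n j = map (\<lambda>k. Suc k = j) [0..<n]"

lemma length_one_hot [simp]: "length (one_hot n j) = n"
  by (simp add: one_hot_def)

lemma one_hot_Suc: "one_hot (Suc n) j = one_hot n j @ [Suc n = j]"
  by (simp add: one_hot_def)

lemma one_hot_last: "one_hot n (Suc n) = replicate n False"
  by (simp add: one_hot_def list_eq_iff_nth_eq)

lemma replicate_Suc_snoc: "replicate (Suc n) x = replicate n x @ [x]"
  by (simp add: replicate_append_same)

lemma one_hot_in_basis_states [simp]: "one_hot n j \<in> basis_states n"
  by (simp add: basis_states_def)

lemma finite_basis_states [simp]: "finite (basis_states n)"
  using finite_lists_length_eq[of "UNIV :: bool set" n] by (simp add: basis_states_def)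

lemma string_entry_snoc:
  assumes "length Q = length a" "length b = length a"
  shows "string_entry (Q @ [p]) (a @ [x]) (b @ [y]) = string_entry Q a b * pauli_entry p x y"
  using assms by (simp add: string_entry_def nth_append)

lemma pauli_entry_cnj: "pauli_entry p a b = cnj (pauli_entry p b a)"
  by (cases p) auto

lemma string_entry_cnj: "string_entry Q a b = cnj (string_entry Q b a)"
  by (simp add: string_entry_def pauli_entry_cnj[of _ "a ! _"])

lemma pauli_strings_0: "pauli_strings 0 = {[]}"
  by (auto simp: pauli_strings_def)

lemma pauli_strings_Suc: "pauli_strings (Suc n) = (\<lambda>(Q, p). Q @ [p]) ` (pauli_strings n \<times> UNIV)"
proof -
  have "xs \<in> (\<lambda>(Q, p). Q @ [p]) ` (pauli_strings n \<times> UNIV)" if "length xs = Suc n" for xs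
    using that by (cases xs rule: rev_cases) (auto simp: pauli_strings_def image_iff)
  then show ?thesis by (auto simp: pauli_strings_def)
qed

lemma length_pauli_strings: "Q \<in> pauli_strings n \<Longrightarrow> length Q = n"
  by (simp add: pauli_strings_def)

lemma UNIV_pauli: "(UNIV :: pauli set) = {PI, PX, PY, PZ}"
  using pauli.exhaust by auto

lemma sum_pauli_strings_Suc:
  "(\<Sum>P\<in>pauli_strings (Suc n). f P)
     = (\<Sum>Q\<in>pauli_strings n. f (Q @ [PI]) + f (Q @ [PX]) + f (Q @ [PY]) + f (Q @ [PZ]))"
proof -
  have inj: "inj_on (\<lambda>(Q, p). Q @ [p]) (pauli_strings n \<times> UNIV)"
    by (auto simp: inj_on_def)
  have "(\<Sum>P\<in>pauli_strings (Suc n). f P) = (\<Sum>(Q, p)\<in>pauli_strings n \<times> UNIV. f (Q @ [p]))"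
    unfolding pauli_strings_Suc sum.reindex[OF inj] by (simp add: comp_def case_prod_unfold)
  also have "\<dots> = (\<Sum>Q\<in>pauli_strings n. \<Sum>p\<in>UNIV. f (Q @ [p]))"
    by (simp add: sum.cartesian_product)
  finally show ?thesis
    by (simp add: UNIV_pauli add.assoc)
qed

text \<open>With \<open>\<psi>\<^sub>c = \<Sum>\<^sub>k c\<^sub>k |one_hot n k\<rangle>\<close>, the next three amplitudes are \<open>\<langle>0|Q|0\<rangle>\<close>, \<open>\<langle>0|Q|\<psi>\<^sub>c\<rangle>\<close>
  and \<open>\<langle>\<psi>\<^sub>c|Q|\<psi>\<^sub>c\<rangle>\<close>. Appending a qubit mixes them linearly because \<open>one_hot n (n + 1)\<close> is the
  all-zero string of length \<open>n\<close>.\<close>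

definition vac_amp :: "nat \<Rightarrow> pauli list \<Rightarrow> complex" where
  "vac_amp n Q = string_entry Q (replicate n False) (replicate n False)"

definition vac_exc_amp :: "nat \<Rightarrow> (nat \<Rightarrow> complex) \<Rightarrow> pauli list \<Rightarrow> complex" where
  "vac_exc_amp n c Q = (\<Sum>k=1..n. c k * string_entry Q (replicate n False) (one_hot n k))"

definition exc_expect :: "nat \<Rightarrow> (nat \<Rightarrow> complex) \<Rightarrow> pauli list \<Rightarrow> complex" where
  "exc_expect n c Q = (\<Sum>j=1..n. \<Sum>k=1..n. cnj (c j) * c k * string_entry Q (one_hot n j) (one_hot n k))"

lemma vac_amp_snoc:
  "length Q = n \<Longrightarrow> vac_amp (Suc n) (Q @ [p]) = vac_amp n Q * pauli_entry p False False"
  by (simp add: vac_amp_def replicate_Suc_snoc string_entry_snoc del: replicate_Suc)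

lemma vac_exc_amp_snoc:
  assumes "length Q = n"
  shows "vac_exc_amp (Suc n) c (Q @ [p])
           = vac_exc_amp n c Q * pauli_entry p False False
             + c (Suc n) * vac_amp n Q * pauli_entry p False True"
  using assms
  by (simp add: vac_exc_amp_def vac_amp_def replicate_Suc_snoc one_hot_Suc one_hot_last
      string_entry_snoc sum_distrib_right mult.assoc del: replicate_Suc)

lemma exc_expect_snoc:
  assumes "length Q = n"
  shows "exc_expect (Suc n) c (Q @ [p])
           = exc_expect n c Q * pauli_entry p False False
             + cnj (c (Suc n)) * vac_exc_amp n c Q * pauli_entry p True False
             + c (Suc n) * cnj (vac_exc_amp n c Q) * pauli_entry p False True
             + cnj (c (Suc n)) * c (Suc n) * vac_amp n Q * pauli_entry p True True"
  using assms
  by (simp add: exc_expect_def vac_amp_def vac_exc_amp_def cnj_sum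
      string_entry_cnj[of Q "one_hot n _" "replicate n False", symmetric]
      replicate_Suc_snoc one_hot_Suc one_hot_last string_entry_snoc
      sum.distrib sum_distrib_left sum_distrib_right algebra_simps del: replicate_Suc)

lemma vac_amp_real: "Q \<in> pauli_strings n \<Longrightarrow> vac_amp n Q = complex_of_real (Re (vac_amp n Q))"
proof (induction n arbitrary: Q)
  case 0
  then show ?case by (simp add: pauli_strings_0 vac_amp_def string_entry_def)
next
  case (Suc n)
  then obtain R p where "Q = R @ [p]" "R \<in> pauli_strings n"
    by (auto simp: pauli_strings_Suc)
  with Suc.IH[of R] show ?case
    by (cases p) (simp_all add: vac_amp_snoc length_pauli_strings)
qed

lemma cnj_mult_self: "cnj z * z = complex_of_real (cmod z ^ 2)"
  by (metis complex_norm_square mult.commute)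

lemma Re_vac_amp_append:
  assumes "length Q = n"
  shows "Re (vac_amp (Suc n) (Q @ [PI])) = Re (vac_amp n Q)"
    and "Re (vac_amp (Suc n) (Q @ [PX])) = 0"
    and "Re (vac_amp (Suc n) (Q @ [PY])) = 0"
    and "Re (vac_amp (Suc n) (Q @ [PZ])) = Re (vac_amp n Q)"
  using assms by (simp_all add: vac_amp_snoc)

lemma vac_exc_amp_append:
  assumes "length Q = n"
  shows "vac_exc_amp (Suc n) c (Q @ [PI]) = vac_exc_amp n c Q"
    and "vac_exc_amp (Suc n) c (Q @ [PX]) = c (Suc n) * vac_amp n Q"
    and "vac_exc_amp (Suc n) c (Q @ [PY]) = - \<i> * (c (Suc n) * vac_amp n Q)"
    and "vac_exc_amp (Suc n) c (Q @ [PZ]) = vac_exc_amp n c Q"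
  using assms by (simp_all add: vac_exc_amp_snoc)

lemma Re_exc_expect_append:
  assumes "length Q = n"
  shows "Re (exc_expect (Suc n) c (Q @ [PI])) = Re (exc_expect n c Q) + cmod (c (Suc n)) ^ 2 * Re (vac_amp n Q)"
    and "Re (exc_expect (Suc n) c (Q @ [PX])) = 2 * Re (cnj (c (Suc n)) * vac_exc_amp n c Q)"
    and "Re (exc_expect (Suc n) c (Q @ [PY])) = - 2 * Im (cnj (c (Suc n)) * vac_exc_amp n c Q)"
    and "Re (exc_expect (Suc n) c (Q @ [PZ])) = Re (exc_expect n c Q) - cmod (c (Suc n)) ^ 2 * Re (vac_amp n Q)"
  using assms by (simp_all add: exc_expect_snoc cnj_mult_self)

definition re_im_pow4 :: "complex \<Rightarrow> real" where
  "re_im_pow4 z = Re z ^ 4 + Im z ^ 4"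

lemma re_im_pow4_eq: "4 * re_im_pow4 z = 3 * cmod z ^ 4 + Re (z ^ 4)"
proof -
  have "cmod z ^ 4 = (cmod z ^ 2) ^ 2"
    by (simp flip: power_mult)
  also have "\<dots> = (Re z ^ 2 + Im z ^ 2) ^ 2"
    by (simp add: cmod_power2)
  finally have "cmod z ^ 4 = (Re z ^ 2 + Im z ^ 2) ^ 2" .
  moreover have "Re (z ^ 4) = Re z ^ 4 - 6 * Re z ^ 2 * Im z ^ 2 + Im z ^ 4"
    by (simp add: numeral_eq_Suc algebra_simps power2_eq_square)
  ultimately show ?thesis
    by (simp add: re_im_pow4_def power2_eq_square power4_eq_xxxx algebra_simps)
qed

lemma re_im_pow4_scale_real: "re_im_pow4 (z * complex_of_real r) = re_im_pow4 z * r ^ 4"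
  by (simp add: re_im_pow4_def power_mult_distrib algebra_simps)

lemma re_im_pow4_rotate: "re_im_pow4 (- \<i> * z) = re_im_pow4 z"
  by (simp add: re_im_pow4_def)

lemma sum_Re_vac_amp_pow4: "(\<Sum>Q\<in>pauli_strings n. Re (vac_amp n Q) ^ 4) = 2 ^ n"
proof (induction n)
  case 0
  then show ?case by (simp add: pauli_strings_0 vac_amp_def string_entry_def)
next
  case (Suc n)
  have "(\<Sum>Q\<in>pauli_strings (Suc n). Re (vac_amp (Suc n) Q) ^ 4)
          = (\<Sum>Q\<in>pauli_strings n. 2 * Re (vac_amp n Q) ^ 4)"
    unfolding sum_pauli_strings_Suc
    by (rule sum.cong) (auto simp: Re_vac_amp_append length_pauli_strings)
  with Suc.IH show ?case
    by (simp flip: sum_distrib_left)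
qed

lemma sum_Re_vac_amp_sq_exc_expect_sq:
  "(\<Sum>Q\<in>pauli_strings n. Re (vac_amp n Q) ^ 2 * Re (exc_expect n c Q) ^ 2)
     = 2 ^ n * (\<Sum>j=1..n. cmod (c j) ^ 4)"
proof (induction n)
  case 0
  then show ?case by (simp add: pauli_strings_0 exc_expect_def)
next
  case (Suc n)
  let ?A = "\<lambda>Q. Re (vac_amp n Q)" and ?T = "\<lambda>Q. Re (exc_expect n c Q)"
  let ?x = "cmod (c (Suc n)) ^ 2"
  have "(\<Sum>Q\<in>pauli_strings (Suc n). Re (vac_amp (Suc n) Q) ^ 2 * Re (exc_expect (Suc n) c Q) ^ 2)
          = (\<Sum>Q\<in>pauli_strings n. 2 * (?A Q ^ 2 * ?T Q ^ 2) + 2 * ?x ^ 2 * ?A Q ^ 4)"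
    unfolding sum_pauli_strings_Suc
  proof (rule sum.cong [OF refl])
    fix Q assume "Q \<in> pauli_strings n"
    then have l: "length Q = n" by (rule length_pauli_strings)
    show "Re (vac_amp (Suc n) (Q @ [PI])) ^ 2 * Re (exc_expect (Suc n) c (Q @ [PI])) ^ 2
             + Re (vac_amp (Suc n) (Q @ [PX])) ^ 2 * Re (exc_expect (Suc n) c (Q @ [PX])) ^ 2
             + Re (vac_amp (Suc n) (Q @ [PY])) ^ 2 * Re (exc_expect (Suc n) c (Q @ [PY])) ^ 2
             + Re (vac_amp (Suc n) (Q @ [PZ])) ^ 2 * Re (exc_expect (Suc n) c (Q @ [PZ])) ^ 2
             = 2 * (?A Q ^ 2 * ?T Q ^ 2) + 2 * ?x ^ 2 * ?A Q ^ 4"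
      by (simp only: Re_vac_amp_append[OF l] Re_exc_expect_append[OF l] power2_eq_square power4_eq_xxxx) algebra
  qed
  also have "\<dots> = 2 ^ Suc n * (\<Sum>j=1..Suc n. cmod (c j) ^ 4)"
    by (simp add: sum.distrib Suc.IH flip: sum_distrib_left power_mult)
      (simp add: sum_Re_vac_amp_pow4 algebra_simps)
  finally show ?case .
qed

lemma sum_re_im_pow4_vac_exc_amp:
  "(\<Sum>Q\<in>pauli_strings n. re_im_pow4 (w * vac_exc_amp n c Q))
     = 2 ^ n * (\<Sum>k=1..n. re_im_pow4 (w * c k))"
proof (induction n)
  case 0
  then show ?case by (simp add: pauli_strings_0 vac_exc_amp_def re_im_pow4_def)
next
  case (Suc n)
  let ?A = "\<lambda>Q. Re (vac_amp n Q)" and ?v = "w * c (Suc n)"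
  have "(\<Sum>Q\<in>pauli_strings (Suc n). re_im_pow4 (w * vac_exc_amp (Suc n) c Q))
          = (\<Sum>Q\<in>pauli_strings n. 2 * re_im_pow4 (w * vac_exc_amp n c Q) + 2 * re_im_pow4 ?v * ?A Q ^ 4)"
    unfolding sum_pauli_strings_Suc
  proof (rule sum.cong [OF refl])
    fix Q assume Q: "Q \<in> pauli_strings n"
    have l: "length Q = n" using Q by (rule length_pauli_strings)
    have real: "w * (c (Suc n) * vac_amp n Q) = ?v * complex_of_real (?A Q)"
      by (subst vac_amp_real [OF Q]) (simp add: mult_ac)
    have real_rot: "w * (- \<i> * (c (Suc n) * vac_amp n Q)) = - \<i> * (?v * complex_of_real (?A Q))"
      by (subst vac_amp_real [OF Q]) (simp add: mult_ac)
    show "re_im_pow4 (w * vac_exc_amp (Suc n) c (Q @ [PI]))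
             + re_im_pow4 (w * vac_exc_amp (Suc n) c (Q @ [PX]))
             + re_im_pow4 (w * vac_exc_amp (Suc n) c (Q @ [PY]))
             + re_im_pow4 (w * vac_exc_amp (Suc n) c (Q @ [PZ]))
             = 2 * re_im_pow4 (w * vac_exc_amp n c Q) + 2 * re_im_pow4 ?v * ?A Q ^ 4"
      by (simp only: vac_exc_amp_append[OF l] real real_rot re_im_pow4_rotate re_im_pow4_scale_real)
  qed
  also have "\<dots> = 2 ^ Suc n * (\<Sum>k=1..Suc n. re_im_pow4 (w * c k))"
    by (simp add: sum.distrib Suc.IH flip: sum_distrib_left)
      (simp add: sum_Re_vac_amp_pow4 algebra_simps)
  finally show ?case .
qed

lemma sum_re_im_pow4_cnj_mult:
  "16 * (\<Sum>k=1..n. re_im_pow4 (cnj w * c k))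
     = 12 * cmod w ^ 4 * (\<Sum>k=1..n. cmod (c k) ^ 4) + 4 * Re (cnj (w ^ 4) * (\<Sum>k=1..n. c k ^ 4))"
proof -
  have "16 * re_im_pow4 (cnj w * c k) = 12 * cmod w ^ 4 * cmod (c k) ^ 4 + 4 * Re (cnj (w ^ 4) * c k ^ 4)" for k
    using re_im_pow4_eq [of "cnj w * c k"] by (simp add: norm_mult power_mult_distrib)
  then show ?thesis
    by (simp add: sum_distrib_left Re_sum sum.distrib)
qed

lemma cmod_add_sq: "cmod (a + b) ^ 2 = cmod a ^ 2 + cmod b ^ 2 + 2 * Re (a * cnj b)"
  by (simp add: cmod_power2) (simp add: power2_eq_square algebra_simps)

lemma sum_Re_exc_expect_pow4:
  "(\<Sum>Q\<in>pauli_strings n. Re (exc_expect n c Q) ^ 4)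
     = 2 ^ n * (6 * (\<Sum>j=1..n. cmod (c j) ^ 4) ^ 2 - 6 * (\<Sum>j=1..n. cmod (c j) ^ 8)
                + cmod (\<Sum>j=1..n. c j ^ 4) ^ 2)"
proof (induction n)
  case 0
  then show ?case by (simp add: pauli_strings_0 exc_expect_def)
next
  case (Suc n)
  let ?A = "\<lambda>Q. Re (vac_amp n Q)" and ?T = "\<lambda>Q. Re (exc_expect n c Q)"
  let ?x = "cmod (c (Suc n)) ^ 2" and ?w = "cnj (c (Suc n))"
  let ?s4 = "\<Sum>j=1..n. cmod (c j) ^ 4" and ?p4 = "\<Sum>j=1..n. c j ^ 4"
  have "(\<Sum>Q\<in>pauli_strings (Suc n). Re (exc_expect (Suc n) c Q) ^ 4)
          = (\<Sum>Q\<in>pauli_strings n. 2 * ?T Q ^ 4 + 12 * ?x ^ 2 * (?A Q ^ 2 * ?T Q ^ 2)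
                                   + 2 * ?x ^ 4 * ?A Q ^ 4 + 16 * re_im_pow4 (?w * vac_exc_amp n c Q))"
    unfolding sum_pauli_strings_Suc
  proof (rule sum.cong [OF refl])
    fix Q assume "Q \<in> pauli_strings n"
    then have l: "length Q = n" by (rule length_pauli_strings)
    show "Re (exc_expect (Suc n) c (Q @ [PI])) ^ 4 + Re (exc_expect (Suc n) c (Q @ [PX])) ^ 4
        + Re (exc_expect (Suc n) c (Q @ [PY])) ^ 4 + Re (exc_expect (Suc n) c (Q @ [PZ])) ^ 4
        = 2 * ?T Q ^ 4 + 12 * ?x ^ 2 * (?A Q ^ 2 * ?T Q ^ 2)
          + 2 * ?x ^ 4 * ?A Q ^ 4 + 16 * re_im_pow4 (?w * vac_exc_amp n c Q)"
      by (simp only: Re_exc_expect_append[OF l] re_im_pow4_def power2_eq_square power4_eq_xxxx) algebra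
  qed
  also have "\<dots> = 2 ^ n * (2 * (6 * ?s4 ^ 2 - 6 * (\<Sum>j=1..n. cmod (c j) ^ 8) + cmod ?p4 ^ 2)
                            + 12 * ?x ^ 2 * ?s4 + 2 * ?x ^ 4 + 16 * (\<Sum>k=1..n. re_im_pow4 (?w * c k)))"
    by (simp add: sum.distrib Suc.IH sum_Re_vac_amp_pow4 sum_Re_vac_amp_sq_exc_expect_sq
        sum_re_im_pow4_vac_exc_amp flip: sum_distrib_left) (simp add: algebra_simps)
  also have "\<dots> = 2 ^ Suc n * (6 * (\<Sum>j=1..Suc n. cmod (c j) ^ 4) ^ 2 - 6 * (\<Sum>j=1..Suc n. cmod (c j) ^ 8)
                + cmod (\<Sum>j=1..Suc n. c j ^ 4) ^ 2)"
  proof -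
    have s4: "(\<Sum>j=1..Suc n. cmod (c j) ^ 4) = ?s4 + ?x ^ 2"
      by (simp flip: power_mult)
    have s8: "(\<Sum>j=1..Suc n. cmod (c j) ^ 8) = (\<Sum>j=1..n. cmod (c j) ^ 8) + ?x ^ 4"
      by (simp flip: power_mult)
    have p4: "cmod (\<Sum>j=1..Suc n. c j ^ 4) ^ 2 = cmod ?p4 ^ 2 + ?x ^ 4 + 2 * Re (cnj (c (Suc n) ^ 4) * ?p4)"
      by (simp add: cmod_add_sq norm_power mult.commute flip: power_mult)
    have x: "cmod (c (Suc n)) ^ 4 = ?x ^ 2"
      by (simp flip: power_mult)
    show ?thesis
      unfolding sum_re_im_pow4_cnj_mult s4 s8 p4 x power_Suc by algebra
  qed
  finally show ?case .
qed

lemma sum_mult_sum_delta: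
  fixes f :: "'a \<Rightarrow> 'c::comm_semiring_1"
  assumes "finite S" "e ` K \<subseteq> S"
  shows "(\<Sum>b\<in>S. f b * (\<Sum>k\<in>K. c k * (if b = e k then 1 else 0))) = (\<Sum>k\<in>K. c k * f (e k))"
proof -
  have "(\<Sum>b\<in>S. f b * (\<Sum>k\<in>K. c k * (if b = e k then 1 else 0)))
          = (\<Sum>k\<in>K. c k * (\<Sum>b\<in>S. if b = e k then f b else 0))"
    by (simp add: sum_distrib_left mult_ac if_distrib sum.swap [of _ S] cong: if_cong)
  also have "\<dots> = (\<Sum>k\<in>K. c k * f (e k))"
    using assms by (intro sum.cong refl) (auto simp: sum.delta')
  finally show ?thesis .
qed

lemma Xi_one_excitation:
  assumes \<psi>: "\<And>a. a \<in> basis_states n \<Longrightarrow> \<psi> a = (\<Sum>j=1..n. c j * (if a = one_hot n j then 1 else 0))"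
  shows "Xi n \<psi> P = Re (exc_expect n c P)"
proof -
  have "apply_string n P \<psi> a = (\<Sum>k=1..n. c k * string_entry P a (one_hot n k))" for a
  proof -
    have "apply_string n P \<psi> a
            = (\<Sum>b\<in>basis_states n. string_entry P a b * (\<Sum>k=1..n. c k * (if b = one_hot n k then 1 else 0)))"
      unfolding apply_string_def by (intro sum.cong refl) (simp add: \<psi>)
    then show ?thesis
      by (simp add: sum_mult_sum_delta image_subset_iff)
  qed
  then have "(\<Sum>a\<in>basis_states n. cnj (\<psi> a) * apply_string n P \<psi> a)
               = (\<Sum>a\<in>basis_states n. (\<Sum>k=1..n. c k * string_entry P a (one_hot n k))
                                       * (\<Sum>j=1..n. cnj (c j) * (if a = one_hot n j then 1 else 0)))"
    by (intro sum.cong refl) (simp add: \<psi> cnj_sum if_distrib mult.commute cong: if_cong)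
  also have "\<dots> = exc_expect n c P"
    by (subst sum_mult_sum_delta) (auto simp: exc_expect_def sum_distrib_left mult_ac)
  finally show ?thesis
    by (simp add: Xi_def)
qed

lemma Xi_norm4_pow4_one_excitation:
  assumes "\<And>a. a \<in> basis_states n \<Longrightarrow> \<psi> a = (\<Sum>j=1..n. c j * (if a = one_hot n j then 1 else 0))"
  shows "Xi_norm4_pow4 n \<psi>
           = 2 ^ n * (6 * (\<Sum>j=1..n. cmod (c j) ^ 4) ^ 2 - 6 * (\<Sum>j=1..n. cmod (c j) ^ 8)
                      + cmod (\<Sum>j=1..n. c j ^ 4) ^ 2)"
  by (simp add: Xi_norm4_pow4_def Xi_one_excitation [OF assms] sum_Re_exc_expect_pow4)

lemma apply_X_on_zero_state:
  assumes "length a = n" "j \<in> {1..n}"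
  shows "apply_string n (X_on n j) (zero_state n) a = (if a = one_hot n j then 1 else 0)"
proof -
  have "replicate n False \<in> basis_states n"
    by (simp add: basis_states_def)
  then have "apply_string n (X_on n j) (zero_state n) a = string_entry (X_on n j) a (replicate n False)"
    by (simp add: apply_string_def zero_state_def if_distrib cong: if_cong)
  also have "\<dots> = (\<Prod>k<n. if a ! k = (Suc k = j) then 1 else 0)"
    unfolding string_entry_def X_on_def using assms by (intro prod.cong) auto
  also have "\<dots> = (if a = one_hot n j then 1 else 0)"
    using assms(1) by (auto simp: list_eq_iff_nth_eq one_hot_def)
  finally show ?thesis .
qed

lemma W_state_one_excitation:
  "a \<in> basis_states n \<Longrightarrow>
     W_state n \<theta> a = (\<Sum>j=1..n. cis (\<theta> j) / sqrt (real n) * (if a = one_hot n j then 1 else 0))"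
  unfolding W_state_def sum_distrib_left
  by (intro sum.cong refl) (simp add: apply_X_on_zero_state basis_states_def)

lemma Xi_norm4_pow4_W_state:
  assumes "n \<ge> 1"
  shows "Xi_norm4_pow4 n (W_state n \<theta>)
           = 2 ^ n / real n ^ 4 * (6 * real n * (real n - 1) + cmod (\<Sum>j=1..n. cis (4 * \<theta> j)) ^ 2)"
proof -
  let ?c = "\<lambda>j. cis (\<theta> j) / complex_of_real (sqrt (real n))"
  have norm_c: "cmod (?c j) ^ 2 = 1 / real n" for j
    by (simp add: norm_divide power_divide)
  have norm_c4: "cmod (?c j) ^ 4 = 1 / real n ^ 2" for j
    using norm_c [of j] by (metis power_mult power_one_over num_double numeral_times_numeral)
  have norm_c8: "cmod (?c j) ^ 8 = 1 / real n ^ 4" for j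
    using norm_c [of j] by (metis power_mult power_one_over num_double numeral_times_numeral)
  have "complex_of_real (sqrt (real n)) ^ 4 = of_real (real n ^ 2)"
    by (metis of_real_power power_mult real_sqrt_pow2 of_nat_0_le_iff num_double numeral_times_numeral)
  then have c4: "?c j ^ 4 = cis (4 * \<theta> j) / of_real (real n ^ 2)" for j
    by (simp add: power_divide DeMoivre)
  have sum_c4: "cmod (\<Sum>j=1..n. ?c j ^ 4) ^ 2 = cmod (\<Sum>j=1..n. cis (4 * \<theta> j)) ^ 2 / real n ^ 4"
    by (simp only: c4 flip: sum_divide_distrib) (simp add: norm_divide norm_power power_divide flip: power_mult)
  have "Xi_norm4_pow4 n (W_state n \<theta>)
          = 2 ^ n * (6 * (\<Sum>j=1..n. cmod (?c j) ^ 4) ^ 2 - 6 * (\<Sum>j=1..n. cmod (?c j) ^ 8)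
                     + cmod (\<Sum>j=1..n. ?c j ^ 4) ^ 2)"
    by (rule Xi_norm4_pow4_one_excitation [OF W_state_one_excitation])
  also have "\<dots> = 2 ^ n * (6 * (real n / real n ^ 2) ^ 2 - 6 * (real n / real n ^ 4)
                            + cmod (\<Sum>j=1..n. cis (4 * \<theta> j)) ^ 2 / real n ^ 4)"
    by (simp only: norm_c4 norm_c8 sum_c4) simp
  also have "\<dots> = 2 ^ n / real n ^ 4 * (6 * real n * (real n - 1) + cmod (\<Sum>j=1..n. cis (4 * \<theta> j)) ^ 2)"
    using assms by (simp add: field_simps power2_eq_square power_numeral_reduce)
  finally show ?thesis .
qed

lemma M2_eq_log:
  assumes "Xi_norm4_pow4 n \<psi> = 2 ^ n * D / N" "0 < D" "0 < N"
  shows "M2 n \<psi> = log 2 (N / D)"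
  using assms by (simp add: M2_def log_divide)

lemma M2_W_state:
  assumes "n \<ge> 1"
  shows "M2 n (W_state n \<theta>)
           = log 2 (real n ^ 4 / (6 * real n * (real n - 1) + cmod (\<Sum>j=1..n. cis (4 * \<theta> j)) ^ 2))"
proof (rule M2_eq_log)
  show "0 < 6 * real n * (real n - 1) + cmod (\<Sum>j=1..n. cis (4 * \<theta> j)) ^ 2"
  proof (cases "n = 1")
    case False
    with assms have "0 < 6 * real n * (real n - 1)" by simp
    then show ?thesis by (simp add: add_pos_nonneg)
  qed simp
qed (use assms Xi_norm4_pow4_W_state in simp_all)

lemma cmod_cis_double_minus_one_sq: "cmod (cis (2 * b) - 1) ^ 2 = 4 * sin b ^ 2"
proof -
  have "cmod (cis (2 * b) - 1) ^ 2 = (cos (2 * b) - 1) ^ 2 + sin (2 * b) ^ 2"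
    by (simp add: cmod_power2)
  also have "\<dots> = 4 * sin b ^ 2"
    unfolding cos_double sin_double using sin_cos_squared_add [of b] by algebra
  finally show ?thesis .
qed

lemma cmod_sum_cis_arith_sq:
  "cmod (\<Sum>j=1..n. cis (4 * (real j * t))) ^ 2
     = (if sin (2 * t) = 0 then (real n)\<^sup>2 else (sin (2 * real n * t))\<^sup>2 / (sin (2 * t))\<^sup>2)"
proof -
  let ?z = "cis (4 * t)"
  have powers: "cis (4 * (real j * t)) = ?z ^ j" for j
    by (simp add: DeMoivre mult_ac)
  show ?thesis
  proof (cases "sin (2 * t) = 0")
    case True
    then have "cmod (?z - 1) = 0"
      using cmod_cis_double_minus_one_sq [of "2 * t"] by simp
    then show ?thesis
      using True by (simp add: powers)
  next
    case False
    have "(?z - 1) * (\<Sum>j=1..n. ?z ^ j) = ?z * (?z ^ n - 1)"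
      by (induction n) (simp_all add: algebra_simps)
    then have "cmod (?z - 1) ^ 2 * cmod (\<Sum>j=1..n. ?z ^ j) ^ 2 = cmod (?z ^ n - 1) ^ 2"
      by (metis norm_mult norm_cis mult_1 power_mult_distrib)
    moreover have "?z ^ n = cis (2 * (2 * real n * t))"
      by (simp add: DeMoivre mult_ac)
    ultimately have "sin (2 * t) ^ 2 * cmod (\<Sum>j=1..n. ?z ^ j) ^ 2 = sin (2 * real n * t) ^ 2"
      using cmod_cis_double_minus_one_sq [of "2 * t"] cmod_cis_double_minus_one_sq [of "2 * real n * t"]
      by (simp add: mult_ac)
    with False show ?thesis
      unfolding powers by (simp add: field_simps)
  qed
qed

theorem mainTheorem13:
  fixes n :: nat and \<theta>s :: "nat \<Rightarrow> real" and \<theta> :: real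
  assumes "n \<ge> 1"
  shows "Xi_norm4_pow4 n (W_state n \<theta>s)
           = 2 ^ n / real n ^ 4 * (6 * real n * (real n - 1) + (cmod (\<Sum>j=1..n. cis (4 * \<theta>s j)))\<^sup>2)
       \<and> M2 n (W_state n \<theta>s)
           = log 2 (real n ^ 4 / (6 * real n * (real n - 1) + (cmod (\<Sum>j=1..n. cis (4 * \<theta>s j)))\<^sup>2))
       \<and> Xi_norm4_pow4 n (W_state n (\<lambda>j. 0)) = 2 ^ n * (7 * real n - 6) / real n ^ 3
       \<and> M2 n (W_state n (\<lambda>j. 0)) = log 2 (real n ^ 3 / (7 * real n - 6))
       \<and> (let r = (if sin (2 * \<theta>) = 0 then (real n)\<^sup>2
                   else (sin (2 * real n * \<theta>))\<^sup>2 / (sin (2 * \<theta>))\<^sup>2)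
          in Xi_norm4_pow4 n (W_state n (\<lambda>j. real j * \<theta>))
               = 2 ^ n * (6 * (real n)\<^sup>2 - 6 * real n + r) / real n ^ 4
           \<and> M2 n (W_state n (\<lambda>j. real j * \<theta>))
               = log 2 (real n ^ 4 / (6 * (real n)\<^sup>2 - 6 * real n + r)))"
proof -
  have "Xi_norm4_pow4 n (W_state n (\<lambda>j. 0)) = 2 ^ n / (real n * real n ^ 3) * (real n * (7 * real n - 6))"
    using Xi_norm4_pow4_W_state [OF assms, of "\<lambda>j. 0"]
    by (simp add: algebra_simps power2_eq_square power_numeral_reduce)
  then have W_norm: "Xi_norm4_pow4 n (W_state n (\<lambda>j. 0)) = 2 ^ n * (7 * real n - 6) / real n ^ 3"
    using assms by simp
  have W_M2: "M2 n (W_state n (\<lambda>j. 0)) = log 2 (real n ^ 3 / (7 * real n - 6))"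
    using W_norm assms by (intro M2_eq_log) simp_all
  let ?r = "if sin (2 * \<theta>) = 0 then (real n)\<^sup>2 else (sin (2 * real n * \<theta>))\<^sup>2 / (sin (2 * \<theta>))\<^sup>2"
  have AP_denominator: "6 * real n * (real n - 1) + cmod (\<Sum>j=1..n. cis (4 * (real j * \<theta>))) ^ 2
             = 6 * (real n)\<^sup>2 - 6 * real n + ?r"
    unfolding cmod_sum_cis_arith_sq by (simp add: algebra_simps power2_eq_square)
  have AP_norm: "Xi_norm4_pow4 n (W_state n (\<lambda>j. real j * \<theta>)) = 2 ^ n * (6 * (real n)\<^sup>2 - 6 * real n + ?r) / real n ^ 4"
    using Xi_norm4_pow4_W_state [OF assms, of "\<lambda>j. real j * \<theta>"] unfolding AP_denominator by simp
  have AP_M2: "M2 n (W_state n (\<lambda>j. real j * \<theta>)) = log 2 (real n ^ 4 / (6 * (real n)\<^sup>2 - 6 * real n + ?r))"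
    using M2_W_state [OF assms, of "\<lambda>j. real j * \<theta>"] unfolding AP_denominator .
  show ?thesis
    using Xi_norm4_pow4_W_state [OF assms] M2_W_state [OF assms] W_norm W_M2 AP_norm AP_M2
    by (simp only: Let_def)
qed

end
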